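(* Let $\mathcal{H}$ be a $[3]$-graph, let $\mathcal{C}=v_1,e_1,\dots,v_\ell,e_\ell,v_1$ be a maximal Berge cycle in $\mathcal{H}$, let $u\in V(\mathcal{H})\setminus V(\mathcal{C})$, and let $U_u$ be a usable set for $u$. If $v_i,v_j\in U_u$ are distinct and adjacent, then $E(v_i,v_j)\subseteq\{e_i,e_j\}$.
   Context: A $[3]$-graph is a hypergraph in which every edge has at most $3$ vertices. A Berge cycle $\mathcal{C}=v_1,e_1,\dots,v_\ell,e_\ell,v_1$ consists of distinct edges $e_1,\dots,e_\ell$ and distinct vertices $v_1,\dots,v_\ell$ with $\{v_i,v_{i+1}\}\subseteq e_i$ (indices modulo $\ell$); $V(\mathcal{C})=\{v_1,\dots,v_\ell\}$. A Berge cycle $\mathcal{C}$ is maximal if there is no Berge cycle $\mathcal{C}'$ with $V(\mathcal{C})\subsetneq V(\mathcal{C}')$. For vertices $x,y$, $E(x,y)$ is the set of edges containing both; $x,y$ are adjacent if $E(x,y)\ne\emptyset$. A set $U_u\subseteq V(\mathcal{C})$ is usable for $u\notin V(\mathcal{C})$ if: (1) for every $v_i\in U_u$, $E(u,v_{i-1})\setminus\{e_{i-2}\}\neq\emptyset$; (2) for any distinct $v_i,v_j\in U_u$, $v_i$ and $v_j$ are not consecutive on $\mathcal{C}$; (3) for any distinct $v_i,v_j\in U_u$ there exist edges $e(u,v_{i-1})\in E(u,v_{i-1})\setminus\{e_{i-2}\}$ and $e(u,v_{j-1})\in E(u,v_{j-1})\setminus\{e_{j-2}\}$ with $e(u,v_{i-1})\neq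 e(u,v_{j-1})$. *)

theory Defs
  imports Main
begin

definition three_graph :: "'a set \<Rightarrow> 'a set set \<Rightarrow> bool" where
  "three_graph V E \<longleftrightarrow> (\<forall>e\<in>E. e \<subseteq> V \<and> finite e \<and> card e \<le> 3)"

definition edges_of :: "'a set set \<Rightarrow> 'a \<Rightarrow> 'a \<Rightarrow> 'a set set" where
  "edges_of E x y = {e \<in> E. x \<in> e \<and> y \<in> e}"

definition adjacent :: "'a set set \<Rightarrow> 'a \<Rightarrow> 'a \<Rightarrow> bool" where
  "adjacent E x y \<longleftrightarrow> edges_of E x y \<noteq> {}"

(* Berge cycle v_0,e_0,...,v_{l-1},e_{l-1},v_0 (0-based indices, modulo l);
   vs = vertex list, es = edge list. *)
definition berge_cycle :: "'a set \<Rightarrow> 'a set set \<Rightarrow> 'a list \<Rightarrow> 'a set list \<Rightarrow> bool" where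
  "berge_cycle V E vs es \<longleftrightarrow>
     length vs = length es \<and> length vs \<ge> 2 \<and> distinct vs \<and> distinct es \<and>
     set vs \<subseteq> V \<and> set es \<subseteq> E \<and>
     (\<forall>i < length vs. {vs ! i, vs ! ((i + 1) mod length vs)} \<subseteq> es ! i)"

definition maximal_berge_cycle :: "'a set \<Rightarrow> 'a set set \<Rightarrow> 'a list \<Rightarrow> 'a set list \<Rightarrow> bool" where
  "maximal_berge_cycle V E vs es \<longleftrightarrow> berge_cycle V E vs es \<and>
     \<not> (\<exists>vs' es'. berge_cycle V E vs' es' \<and> set vs \<subset> set vs')"

definition cprev :: "nat \<Rightarrow> nat \<Rightarrow> nat" where
  "cprev l i = (i + l - 1) mod l"

definition cprev2 :: "nat \<Rightarrow> nat \<Rightarrow> nat" where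
  "cprev2 l i = (i + 2 * l - 2) mod l"

definition usable :: "'a set set \<Rightarrow> 'a list \<Rightarrow> 'a set list \<Rightarrow> 'a \<Rightarrow> 'a set \<Rightarrow> bool" where
  "usable E vs es u U \<longleftrightarrow>
     (let l = length vs in
      U \<subseteq> set vs \<and>
      (\<forall>i < l. vs ! i \<in> U \<longrightarrow>
          edges_of E u (vs ! cprev l i) - {es ! cprev2 l i} \<noteq> {}) \<and>
      (\<forall>i < l. \<forall>j < l. vs ! i \<in> U \<and> vs ! j \<in> U \<and> i \<noteq> j \<longrightarrow>
          j \<noteq> (i + 1) mod l \<and> i \<noteq> (j + 1) mod l) \<and>
      (\<forall>i < l. \<forall>j < l. vs ! i \<in> U \<and> vs ! j \<in> U \<and> i \<noteq> j \<longrightarrow>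
          (\<exists>a \<in> edges_of E u (vs ! cprev l i) - {es ! cprev2 l i}.
           \<exists>b \<in> edges_of E u (vs ! cprev l j) - {es ! cprev2 l j}. a \<noteq> b)))"

end

theory Submission
  imports Defs
begin

(* Suppose an edge F other than e_i and e_j contains v_i and v_j. Usability provides distinct
   edges A \<ni> u, v_(i-1) and B \<ni> u, v_(j-1) with A \<noteq> e_(i-2) and B \<noteq> e_(j-2). Then
     u, A, v_(i-1), e_(i-2), v_(i-2), ..., e_j, v_j, F, v_i, e_i, v_(i+1), ..., e_(j-2), v_(j-1), B, u
   is a Berge cycle on V(C) \<union> {u}, contradicting maximality. The [3]-graph hypothesis is what
   makes its edges distinct: an edge containing two vertices outside {v_k, v_(k+1)} cannot be e_k,
   for it would then have four vertices. *)

lemma three_graph_no_four_in_edge: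
  assumes "three_graph V E" "e \<in> E" "distinct [a, b, c, d]" "{a, b, c, d} \<subseteq> e"
  shows False
proof -
  have "finite e" "card e \<le> 3" using assms(1,2) unfolding three_graph_def by auto
  moreover have "card {a, b, c, d} = 4" using assms(3) by simp
  ultimately show False using card_mono[OF _ assms(4)] by simp
qed

lemma berge_cycle_edge_contains:
  assumes "berge_cycle V E vs es" "k + 1 < length vs"
  shows "vs ! k \<in> es ! k" "vs ! (k + 1) \<in> es ! k"
proof -
  have "{vs ! k, vs ! ((k + 1) mod length vs)} \<subseteq> es ! k"
    using assms unfolding berge_cycle_def by (meson add_lessD1)
  then show "vs ! k \<in> es ! k" "vs ! (k + 1) \<in> es ! k" using assms(2) by simp_all
qed

lemma berge_cycle_rotate:
  assumes "berge_cycle V E vs es"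
  shows "berge_cycle V E (rotate n vs) (rotate n es)"
  unfolding berge_cycle_def
proof (intro conjI allI impI)
  let ?l = "length vs"
  have C: "length es = ?l" "2 \<le> ?l" "distinct vs" "distinct es" "set vs \<subseteq> V" "set es \<subseteq> E"
    "\<And>k. k < ?l \<Longrightarrow> {vs ! k, vs ! ((k + 1) mod ?l)} \<subseteq> es ! k"
    using assms unfolding berge_cycle_def by auto
  then show "length (rotate n vs) = length (rotate n es)" "2 \<le> length (rotate n vs)"
    "distinct (rotate n vs)" "distinct (rotate n es)"
    "set (rotate n vs) \<subseteq> V" "set (rotate n es) \<subseteq> E"
    by simp_all
  fix k assume "k < length (rotate n vs)"
  then have k: "k < ?l" by simp
  then have "(n + k) mod ?l < ?l" by (intro mod_less_divisor) linarith
  have "((n + k) mod ?l + 1) mod ?l = (n + (k + 1) mod ?l) mod ?l"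
    by (simp add: mod_Suc_eq mod_add_right_eq)
  moreover have "(k + 1) mod ?l < ?l" using k by (intro mod_less_divisor) linarith
  ultimately have "rotate n vs ! ((k + 1) mod ?l) = vs ! (((n + k) mod ?l + 1) mod ?l)"
    by (metis nth_rotate)
  moreover have "rotate n vs ! k = vs ! ((n + k) mod ?l)" "rotate n es ! k = es ! ((n + k) mod ?l)"
    using k C(1) by (simp_all add: nth_rotate)
  ultimately show "{rotate n vs ! k, rotate n vs ! ((k + 1) mod length (rotate n vs))} \<subseteq> rotate n es ! k"
    using C(7)[OF \<open>(n + k) mod ?l < ?l\<close>] by simp
qed

lemma berge_cycle_of_fun:
  assumes "2 \<le> n" "inj_on w {..<n}" "inj_on g {..<n}" "w ` {..<n} \<subseteq> V" "g ` {..<n} \<subseteq> E"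
    and "\<And>m. m < n \<Longrightarrow> w m \<in> g m \<and> w (Suc m mod n) \<in> g m"
  shows "berge_cycle V E (map w [0..<n]) (map g [0..<n])"
  using assms unfolding berge_cycle_def by (auto simp: distinct_map atLeast0LessThan)

lemma cprev_add_mod:
  assumes "1 \<le> d" shows "cprev l ((i + d) mod l) = (i + (d - 1)) mod l"
proof (cases "l = 0")
  case False
  then have "cprev l ((i + d) mod l) = ((i + d) mod l + (l - 1)) mod l"
    unfolding cprev_def by simp
  also have "\<dots> = (i + d + (l - 1)) mod l" by (simp add: mod_add_left_eq)
  also have "i + d + (l - 1) = i + (d - 1) + l" using assms False by simp
  finally show ?thesis by simp
qed (use assms in \<open>simp add: cprev_def\<close>)

lemma cprev2_add_mod:
  assumes "2 \<le> d" shows "cprev2 l ((i + d) mod l) = (i + (d - 2)) mod l"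
proof (cases "l = 0")
  case False
  then have "cprev2 l ((i + d) mod l) = ((i + d) mod l + (2 * l - 2)) mod l"
    unfolding cprev2_def by simp
  also have "\<dots> = (i + d + (2 * l - 2)) mod l" by (simp add: mod_add_left_eq)
  also have "i + d + (2 * l - 2) = i + (d - 2) + 2 * l" using assms False by simp
  finally show ?thesis by simp
qed (use assms in \<open>simp add: cprev2_def\<close>)

(* With v_k = xs ! k and e_k = ys ! k, the chord F joins v_0 and v_d. The new cycle of length l + 1
   visits u at position 0, then v_(l-1), ..., v_d at positions 1, ..., l - d and v_0, ..., v_(d-1)
   at positions l - d + 1, ..., l; its edges are A, F and B at positions 0, l - d and l. *)
definition reroute_vertex_index :: "nat \<Rightarrow> nat \<Rightarrow> nat \<Rightarrow> nat" where
  "reroute_vertex_index l d m = (if m \<le> l - d then l - m else m - (l - d + 1))"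

definition reroute_edge_index :: "nat \<Rightarrow> nat \<Rightarrow> nat \<Rightarrow> nat" where
  "reroute_edge_index l d m = (if m < l - d then l - m - 1 else m - (l - d + 1))"

definition rerouted_vertex :: "'a list \<Rightarrow> nat \<Rightarrow> 'a \<Rightarrow> nat \<Rightarrow> 'a" where
  "rerouted_vertex xs d u m = (if m = 0 then u else xs ! reroute_vertex_index (length xs) d m)"

definition rerouted_edge :: "'a set list \<Rightarrow> nat \<Rightarrow> 'a set \<Rightarrow> 'a set \<Rightarrow> 'a set \<Rightarrow> nat \<Rightarrow> 'a set" where
  "rerouted_edge ys d A B F m =
     (if m = 0 then A else if m = length ys - d then F else if m = length ys then B
      else ys ! reroute_edge_index (length ys) d m)"

lemma reroute_vertex_index_bij:
  assumes "d \<le> l"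
  shows "bij_betw (reroute_vertex_index l d) {1..l} {..<l}"
proof (rule bij_betw_imageI)
  show "inj_on (reroute_vertex_index l d) {1..l}"
    using assms unfolding inj_on_def reroute_vertex_index_def by (auto split: if_splits)
  show "reroute_vertex_index l d ` {1..l} = {..<l}"
  proof (intro equalityI subsetI)
    fix k assume "k \<in> {..<l}"
    then have "k = reroute_vertex_index l d (if d \<le> k then l - k else k + (l - d + 1))"
      "(if d \<le> k then l - k else k + (l - d + 1)) \<in> {1..l}"
      using assms unfolding reroute_vertex_index_def by auto
    then show "k \<in> reroute_vertex_index l d ` {1..l}" by blast
  qed (auto simp: reroute_vertex_index_def)
qed

lemma reroute_edge_index_inj:
  assumes "1 \<le> d" "d < l"
  shows "inj_on (reroute_edge_index l d) ({1..<l} - {l - d})"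
  using assms unfolding inj_on_def reroute_edge_index_def by (auto split: if_splits)

lemma reroute_edge_index_image:
  assumes "1 \<le> d" "d < l"
  shows "reroute_edge_index l d ` ({1..<l} - {l - d}) \<subseteq> {k. k + 1 < l \<and> k \<noteq> d - 1}"
  using assms unfolding reroute_edge_index_def by auto

lemma rerouted_vertex_inj_image:
  assumes "distinct xs" "u \<notin> set xs" "d \<le> length xs"
  shows "inj_on (rerouted_vertex xs d u) {..<length xs + 1}"
    and "rerouted_vertex xs d u ` {..<length xs + 1} = insert u (set xs)"
proof -
  let ?l = "length xs" and ?w = "rerouted_vertex xs d u" and ?p = "reroute_vertex_index (length xs) d"
  have p: "inj_on ?p {1..?l}" "?p ` {1..?l} = {..<?l}"
    using reroute_vertex_index_bij[OF assms(3)] unfolding bij_betw_def by auto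
  have nth: "inj_on (nth xs) {..<?l}" "nth xs ` {..<?l} = set xs"
    using assms(1) by (auto simp: inj_on_nth set_conv_nth)
  have w_eq: "?w m = (nth xs \<circ> ?p) m" if "m \<in> {1..?l}" for m
    using that unfolding rerouted_vertex_def by simp
  have "inj_on (nth xs \<circ> ?p) {1..?l}" using comp_inj_on[OF p(1)] nth(1) p(2) by simp
  then have inj: "inj_on ?w {1..?l}" using inj_on_cong[of "{1..?l}" ?w "nth xs \<circ> ?p", OF w_eq] by simp
  have "?w ` {1..?l} = (nth xs \<circ> ?p) ` {1..?l}" using image_cong[OF refl w_eq] .
  also have "\<dots> = nth xs ` ?p ` {1..?l}" by (rule image_comp[symmetric])
  finally have img: "?w ` {1..?l} = set xs" using nth(2) p(2) by simp
  have "{..<?l + 1} = insert 0 {1..?l}" "?w 0 = u" by (auto simp: rerouted_vertex_def)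
  then show "inj_on ?w {..<?l + 1}" "?w ` {..<?l + 1} = insert u (set xs)"
    using inj img assms(2) by auto
qed

lemma rerouted_edge_inj_image:
  assumes ys: "distinct ys" and d: "1 \<le> d" "d < length ys"
    and new: "A \<noteq> B" "A \<noteq> F" "B \<noteq> F"
      "\<And>k. k + 1 < length ys \<Longrightarrow> k \<noteq> d - 1 \<Longrightarrow> ys ! k \<notin> {A, B, F}"
  shows "inj_on (rerouted_edge ys d A B F) {..<length ys + 1}"
    and "rerouted_edge ys d A B F ` {..<length ys + 1} \<subseteq> insert A (insert B (insert F (set ys)))"
proof -
  let ?l = "length ys" and ?g = "rerouted_edge ys d A B F" and ?q = "reroute_edge_index (length ys) d"
  define M where "M = {1..<?l} - {?l - d}"
  have q: "inj_on ?q M" "?q ` M \<subseteq> {k. k + 1 < ?l \<and> k \<noteq> d - 1}"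
    using reroute_edge_index_inj[OF d] reroute_edge_index_image[OF d] unfolding M_def by auto
  have g_M: "?g m = (nth ys \<circ> ?q) m" if "m \<in> M" for m
    using that unfolding rerouted_edge_def M_def by auto
  have "inj_on (nth ys) (?q ` M)" using q(2) ys by (intro inj_on_nth) auto
  then have "inj_on (nth ys \<circ> ?q) M" by (rule comp_inj_on[OF q(1)])
  then have inj_M: "inj_on ?g M" using inj_on_cong[of M ?g "nth ys \<circ> ?q", OF g_M] by simp
  have "?g ` M = nth ys ` ?q ` M" using image_cong[OF refl g_M] by (simp add: image_comp)
  then have img_M: "?g ` M \<subseteq> nth ys ` {k. k + 1 < ?l \<and> k \<noteq> d - 1}"
    using q(2) by (simp add: image_mono)
  have corners: "{..<?l + 1} = {0, ?l - d, ?l} \<union> M" "{0, ?l - d, ?l} \<inter> M = {}"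
    "M \<inter> {0, ?l - d, ?l} = {}"
    using d unfolding M_def by auto
  have "?g 0 = A" "?g (?l - d) = F" "?g ?l = B" "0 \<noteq> ?l - d" "0 \<noteq> ?l" "?l - d \<noteq> ?l"
    using d unfolding rerouted_edge_def by auto
  then have inj_corners: "inj_on ?g {0, ?l - d, ?l}" and img_corners: "?g ` {0, ?l - d, ?l} = {A, F, B}"
    using new(1-3) by (simp_all add: inj_on_def)
  have "x \<notin> {A, B, F}" if "x \<in> ?g ` M" for x
  proof -
    have "x \<in> nth ys ` {k. k + 1 < ?l \<and> k \<noteq> d - 1}" using that img_M ..
    then obtain k where "k + 1 < ?l" "k \<noteq> d - 1" "x = ys ! k" by blast
    then show ?thesis using new(4) by simp
  qed
  then have "?g ` {0, ?l - d, ?l} \<inter> ?g ` M = {}" unfolding img_corners by blast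
  then show "inj_on ?g {..<?l + 1}"
    unfolding corners(1) inj_on_Un Diff_triv[OF corners(2)] Diff_triv[OF corners(3)]
    using inj_corners inj_M by blast
  have "nth ys ` {k. k + 1 < ?l \<and> k \<noteq> d - 1} \<subseteq> set ys" by auto
  with img_M have "?g ` M \<subseteq> set ys" by (rule order_trans)
  then show "?g ` {..<?l + 1} \<subseteq> insert A (insert B (insert F (set ys)))"
    unfolding corners(1) image_Un img_corners by blast
qed

lemma rerouted_cycle_linked:
  assumes C: "berge_cycle V E xs ys" and d: "1 \<le> d" "d < length xs"
    and A: "u \<in> A" "xs ! (length xs - 1) \<in> A" and B: "u \<in> B" "xs ! (d - 1) \<in> B"
    and F: "xs ! 0 \<in> F" "xs ! d \<in> F"
    and m: "m < length xs + 1"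
  shows "rerouted_vertex xs d u m \<in> rerouted_edge ys d A B F m \<and>
    rerouted_vertex xs d u (Suc m mod (length xs + 1)) \<in> rerouted_edge ys d A B F m"
proof -
  let ?l = "length xs"
  have len: "length ys = ?l" using C unfolding berge_cycle_def by simp
  have edge: "xs ! k \<in> ys ! k" "xs ! (k + 1) \<in> ys ! k" if "k + 1 < ?l" for k
    using berge_cycle_edge_contains[OF C that] by auto
  note defs = rerouted_vertex_def rerouted_edge_def reroute_vertex_index_def reroute_edge_index_def len
  consider "m = 0" | "0 < m" "m < ?l - d" | "m = ?l - d" | "?l - d < m" "m < ?l" | "m = ?l"
    using m d by linarith
  then show ?thesis
  proof cases
    case 1
    then show ?thesis using A d unfolding defs by auto
  next
    case 2
    then have "?l - m - 1 + 1 < ?l" "?l - m - 1 + 1 = ?l - m" by auto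
    then show ?thesis using 2 edge[of "?l - m - 1"] unfolding defs by auto
  next
    case 3
    then show ?thesis using F d unfolding defs by auto
  next
    case 4
    then have "m - (?l - d + 1) + 1 < ?l" "m + 1 - (?l - d + 1) = m - (?l - d + 1) + 1" by auto
    then show ?thesis using 4 edge[of "m - (?l - d + 1)"] unfolding defs by auto
  next
    case 5
    then have "?l - (?l - d + 1) = d - 1" using d by auto
    then show ?thesis using 5 B d unfolding defs by auto
  qed
qed

lemma berge_cycle_reroute:
  assumes C: "berge_cycle V E xs ys" and l: "length xs = l"
    and d: "1 \<le> d" "d < l"
    and u: "u \<in> V" "u \<notin> set xs"
    and A: "A \<in> E" "u \<in> A" "xs ! (l - 1) \<in> A"
    and B: "B \<in> E" "u \<in> B" "xs ! (d - 1) \<in> B"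
    and F: "F \<in> E" "xs ! 0 \<in> F" "xs ! d \<in> F"
    and new: "A \<noteq> B" "A \<noteq> F" "B \<noteq> F"
      "\<And>k. k + 1 < l \<Longrightarrow> k \<noteq> d - 1 \<Longrightarrow> ys ! k \<notin> {A, B, F}"
  shows "\<exists>ws gs. berge_cycle V E ws gs \<and> set ws = insert u (set xs)"
proof -
  have ys: "length ys = l" "distinct xs" "distinct ys" "set xs \<subseteq> V" "set ys \<subseteq> E"
    using C l unfolding berge_cycle_def by auto
  let ?w = "rerouted_vertex xs d u" and ?g = "rerouted_edge ys d A B F"
  have w: "inj_on ?w {..<l + 1}" "?w ` {..<l + 1} = insert u (set xs)"
    using rerouted_vertex_inj_image[OF ys(2) u(2)] d l by auto
  have g: "inj_on ?g {..<l + 1}" "?g ` {..<l + 1} \<subseteq> insert A (insert B (insert F (set ys)))"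
    using rerouted_edge_inj_image[OF ys(3), of d A B F] d new ys(1) by auto
  have "berge_cycle V E (map ?w [0..<l + 1]) (map ?g [0..<l + 1])"
  proof (rule berge_cycle_of_fun)
    show "?w ` {..<l + 1} \<subseteq> V" unfolding w(2) using u(1) ys(4) by simp
    have "insert A (insert B (insert F (set ys))) \<subseteq> E" using A(1) B(1) F(1) ys(5) by simp
    with g(2) show "?g ` {..<l + 1} \<subseteq> E" by (rule order_trans)
    show "?w m \<in> ?g m \<and> ?w (Suc m mod (l + 1)) \<in> ?g m" if "m < l + 1" for m
      using rerouted_cycle_linked[OF C _ _ A(2) _ B(2,3) F(2,3)] d A(3) l that by simp
  qed (use d w(1) g(1) in auto)
  moreover have "set (map ?w [0..<l + 1]) = insert u (set xs)"
    using w(2) by (simp only: set_map set_upt atLeast0LessThan)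
  ultimately show ?thesis by blast
qed

lemma three_graph_cycle_edge_ne:
  assumes G: "three_graph V E" and C: "berge_cycle V E xs ys" and k: "k + 1 < length xs"
    and e: "e \<in> E" "a \<in> e" "b \<in> e" "a \<noteq> b"
    and off: "a \<notin> {xs ! k, xs ! (k + 1)}" "b \<notin> {xs ! k, xs ! (k + 1)}"
  shows "e \<noteq> ys ! k"
proof
  assume "e = ys ! k"
  then have "{a, b, xs ! k, xs ! (k + 1)} \<subseteq> e" using e berge_cycle_edge_contains[OF C k] by auto
  moreover have "xs ! k \<noteq> xs ! (k + 1)"
    using C k unfolding berge_cycle_def by (simp add: nth_eq_iff_index_eq)
  ultimately show False using three_graph_no_four_in_edge[OF G e(1)] e(4) off by auto
qed

lemma three_graph_reroute:
  assumes G: "three_graph V E" and C: "berge_cycle V E xs ys" and l: "length xs = l"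
    and d: "2 \<le> d" "d + 2 \<le> l"
    and u: "u \<in> V" "u \<notin> set xs"
    and A: "A \<in> E" "u \<in> A" "xs ! (l - 1) \<in> A" "A \<noteq> ys ! (l - 2)"
    and B: "B \<in> E" "u \<in> B" "xs ! (d - 1) \<in> B" "B \<noteq> ys ! (d - 2)"
    and AB: "A \<noteq> B"
    and F: "F \<in> E" "xs ! 0 \<in> F" "xs ! d \<in> F" "F \<noteq> ys ! 0" "F \<noteq> ys ! d"
  shows "\<exists>ws gs. berge_cycle V E ws gs \<and> set ws = insert u (set xs)"
proof (rule berge_cycle_reroute[OF C l _ _ u A(1-3) B(1-3) F(1-3) AB])
  have xs_eq: "xs ! p = xs ! q \<longleftrightarrow> p = q" if "p < l" "q < l" for p q
    using C l that unfolding berge_cycle_def by (simp add: nth_eq_iff_index_eq)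
  have u_ne: "u \<noteq> xs ! p" if "p < l" for p using u(2) l that by auto
  show "1 \<le> d" "d < l" using d by auto
  show "A \<noteq> F"
  proof
    assume "A = F"
    then have "{u, xs ! (l - 1), xs ! 0, xs ! d} \<subseteq> A" using A F by auto
    moreover have "distinct [u, xs ! (l - 1), xs ! 0, xs ! d]" using d xs_eq u_ne by auto
    ultimately show False using three_graph_no_four_in_edge[OF G A(1)] by blast
  qed
  show "B \<noteq> F"
  proof
    assume "B = F"
    then have "{u, xs ! (d - 1), xs ! 0, xs ! d} \<subseteq> B" using B F by auto
    moreover have "distinct [u, xs ! (d - 1), xs ! 0, xs ! d]" using d xs_eq u_ne by auto
    ultimately show False using three_graph_no_four_in_edge[OF G B(1)] by blast
  qed
  fix k assume k: "k + 1 < l" "k \<noteq> d - 1"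
  have "A \<noteq> ys ! k"
  proof (cases "k = l - 2")
    case False
    then show ?thesis
      by (intro three_graph_cycle_edge_ne[OF G C k(1)[folded l] A(1,2,3)])
        (use k d in \<open>auto simp: xs_eq u_ne\<close>)
  qed (use A in simp)
  moreover have "B \<noteq> ys ! k"
  proof (cases "k = d - 2")
    case False
    then show ?thesis
      by (intro three_graph_cycle_edge_ne[OF G C k(1)[folded l] B(1,2,3)])
        (use k d in \<open>auto simp: xs_eq u_ne\<close>)
  qed (use B in simp)
  moreover have "F \<noteq> ys ! k"
  proof (cases "k = 0 \<or> k = d")
    case False
    then show ?thesis
      by (intro three_graph_cycle_edge_ne[OF G C k(1)[folded l] F(1,2,3)])
        (use k d in \<open>auto simp: xs_eq u_ne\<close>)
  qed (use F in auto)
  ultimately show "ys ! k \<notin> {A, B, F}" by auto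
qed

lemma nonconsecutive_cyclic_offset:
  fixes i j l :: nat
  assumes "i < l" "j < l" "i \<noteq> j" "j \<noteq> (i + 1) mod l" "i \<noteq> (j + 1) mod l"
  obtains d where "2 \<le> d" "d + 2 \<le> l" "(i + d) mod l = j"
proof
  define d where "d = (j + l - i) mod l"
  have "(i + d) mod l = (i + (j + l - i)) mod l" unfolding d_def by (simp add: mod_add_right_eq)
  also have "i + (j + l - i) = j + l" using assms(1) by simp
  finally show j_eq: "(i + d) mod l = j" using assms(2) by simp
  have "d < l" using assms(1) unfolding d_def by simp
  moreover have "d \<noteq> 0"
  proof
    assume "d = 0"
    then show False using j_eq assms(1,3) by simp
  qed
  moreover have "d \<noteq> 1" using j_eq assms(4) by auto
  moreover have "d \<noteq> l - 1"
  proof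
    assume "d = l - 1"
    moreover have "(j + 1) mod l = (i + (d + 1)) mod l" using j_eq by (auto simp: mod_Suc_eq)
    ultimately have "(j + 1) mod l = (i + l) mod l" using assms(1) by simp
    then show False using assms(1,5) by simp
  qed
  ultimately show "2 \<le> d" "d + 2 \<le> l" by auto
qed

lemma three_graph_berge_cycle_extend:
  assumes G: "three_graph V E" and C: "berge_cycle V E vs es"
    and u: "u \<in> V" "u \<notin> set vs"
    and ij: "i < length vs" "j < length vs" "i \<noteq> j"
      "j \<noteq> (i + 1) mod length vs" "i \<noteq> (j + 1) mod length vs"
    and A: "A \<in> E" "u \<in> A" "vs ! cprev (length vs) i \<in> A" "A \<noteq> es ! cprev2 (length vs) i"
    and B: "B \<in> E" "u \<in> B" "vs ! cprev (length vs) j \<in> B" "B \<noteq> es ! cprev2 (length vs) j"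
    and AB: "A \<noteq> B"
    and F: "F \<in> E" "vs ! i \<in> F" "vs ! j \<in> F" "F \<noteq> es ! i" "F \<noteq> es ! j"
  shows "\<exists>ws gs. berge_cycle V E ws gs \<and> set ws = insert u (set vs)"
proof -
  define l where "l = length vs"
  obtain d where d: "2 \<le> d" "d + 2 \<le> l" and j_eq: "(i + d) mod l = j"
    using nonconsecutive_cyclic_offset[OF ij] unfolding l_def .
  have len: "length (rotate i vs) = l" "length es = l" "2 \<le> l"
    using C unfolding l_def berge_cycle_def by auto
  have i_eq: "(i + l) mod l = i" using ij(1) unfolding l_def by simp
  have rot: "rotate i vs ! k = vs ! ((i + k) mod l)" "rotate i es ! k = es ! ((i + k) mod l)"
    if "k < l" for k using that len unfolding l_def by (simp_all add: nth_rotate)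
  have "rotate i vs ! (l - 1) = vs ! cprev l i" "rotate i es ! (l - 2) = es ! cprev2 l i"
    using rot[of "l - 1"] rot[of "l - 2"] len cprev_add_mod[of l l i] cprev2_add_mod[of l l i]
    unfolding i_eq by simp_all
  then have A': "rotate i vs ! (l - 1) \<in> A" "A \<noteq> rotate i es ! (l - 2)"
    using A unfolding l_def by simp_all
  have "rotate i vs ! (d - 1) = vs ! cprev l j" "rotate i es ! (d - 2) = es ! cprev2 l j"
    using rot[of "d - 1"] rot[of "d - 2"] d cprev_add_mod[of d l i] cprev2_add_mod[of d l i]
    unfolding j_eq by simp_all
  then have B': "rotate i vs ! (d - 1) \<in> B" "B \<noteq> rotate i es ! (d - 2)"
    using B unfolding l_def by simp_all
  have "rotate i vs ! 0 = vs ! i" "rotate i vs ! d = vs ! j"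
    "rotate i es ! 0 = es ! i" "rotate i es ! d = es ! j"
    using rot[of 0] rot[of d] d i_eq j_eq by simp_all
  then have F': "rotate i vs ! 0 \<in> F" "rotate i vs ! d \<in> F"
    "F \<noteq> rotate i es ! 0" "F \<noteq> rotate i es ! d"
    using F by simp_all
  have "\<exists>ws gs. berge_cycle V E ws gs \<and> set ws = insert u (set (rotate i vs))"
    using three_graph_reroute[OF G berge_cycle_rotate[OF C] len(1) d u(1) _ A(1,2) A' B(1,2) B'
        AB F(1) F']
      u(2) by simp
  then show ?thesis by simp
qed

theorem claim2p4:
  fixes V :: "'a set" and E :: "'a set set" and vs :: "'a list" and es :: "'a set list"
    and u :: 'a and U :: "'a set" and i j :: nat
  assumes "three_graph V E"
    and "maximal_berge_cycle V E vs es"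
    and "u \<in> V" and "u \<notin> set vs"
    and "usable E vs es u U"
    and "i < length vs" and "j < length vs" and "i \<noteq> j"
    and "vs ! i \<in> U" and "vs ! j \<in> U"
    and "adjacent E (vs ! i) (vs ! j)"
  shows "edges_of E (vs ! i) (vs ! j) \<subseteq> {es ! i, es ! j}"
proof (rule ccontr)
  assume "\<not> ?thesis"
  then obtain F where F: "F \<in> E" "vs ! i \<in> F" "vs ! j \<in> F" "F \<noteq> es ! i" "F \<noteq> es ! j"
    unfolding edges_of_def by auto
  have C: "berge_cycle V E vs es"
    and max: "\<not> (\<exists>ws gs. berge_cycle V E ws gs \<and> set vs \<subset> set ws)"
    using assms(2) unfolding maximal_berge_cycle_def by auto
  let ?l = "length vs"
  have "j \<noteq> (i + 1) mod ?l" "i \<noteq> (j + 1) mod ?l"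
    and "\<exists>a \<in> edges_of E u (vs ! cprev ?l i) - {es ! cprev2 ?l i}.
           \<exists>b \<in> edges_of E u (vs ! cprev ?l j) - {es ! cprev2 ?l j}. a \<noteq> b"
    using assms(5-10) unfolding usable_def Let_def by blast+
  then obtain ws gs where "berge_cycle V E ws gs" "set ws = insert u (set vs)"
    using three_graph_berge_cycle_extend[OF assms(1) C assms(3,4,6-8)] F
    unfolding edges_of_def by blast
  then show False using max assms(4) by blast
qed

end
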